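(* Let $G=\langle c,s\rangle$ and $\phi:H\to G$ be as in the context. Let $w=s^{\alpha_0}c^{\beta_1}s^{\alpha_1}c^{\beta_2}\cdots s^{\alpha_{n-1}}c^{\beta_n}s^{\alpha_n}$, where $n\ge1$, $\alpha_0,\ldots,\alpha_n,\beta_1,\ldots,\beta_n$ are integers, all nonzero except possibly $\alpha_0$ and $\alpha_n$. Put $\gamma_j=\sum_{i=0}^{j-1}\alpha_i$ for $j=1,\ldots,n$ and $B_i=\{j\in\{1,\ldots,n\}:\gamma_j=\gamma_i\}$. If $w$, regarded as an element of $G$, belongs to $\phi(H)$, then $\sum_{j\in B_i}\beta_j=0$ for all $i=1,\ldots,n$.
   Context: Notation: $x^y=yxy^{-1}$, $[x,y]=xyx^{-1}y^{-1}$. For groups $A,B$, the wreath product $A\,\mathrm{Wr}\,B$ is the semidirect product $A^B\rtimes B$, where $A^B$ is the group of all functions $B\to A$ with pointwise multiplication and $B$ acts by $(bf)(x)=f(xb)$, written $f^b=bfb^{-1}$. $H$ is a group generated by a countable set $\{a^{(1)},a^{(2)},\ldots\}$. Let $Z=\langle z\rangle$ be infinite cyclic and $b^{(i)}\in H^Z$ with $b^{(i)}(z^k)=a^{(i)}$ if $k>0$ and $1$ otherwise; $K=\langle z,b^{(i)}\ (i\in\mathbb{N})\rangle\le H\,\mathrm{Wr}\,Z$. Let $\langle s\rangle$ be infinite cyclic and $c\in K^{\langle s\rangle}$ with $c(s)=z$, $c(s^{2^i})=b^{(i)}$ for $i>0$, $c(s^k)=1$ otherwise; $G=\langle c,s\rangle\le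 K\,\mathrm{Wr}\,\langle s\rangle$. The map $\phi:H\to G$, $a^{(i)}\mapsto[c,c^{s^{2^i-1}}]$, is an injective homomorphism. *)

theory Defs
  imports "HOL-Algebra.Algebra"
begin

text \<open>Unrestricted wreath product A Wr Z with Z infinite cyclic, generator identified
with 1 :: int.  An element (f, m) stands for f z^m, where f : Z \<rightarrow> A is an arbitrary
function (no finiteness of support).  The action is (z^m f)(z^x) = f(z^(x+m)), so
(f, m)(g, n) = (f \<cdot> z^m g z^-m, m + n) = (\<lambda>x. f x \<cdot> g (x + m), m + n).\<close>
definition wr :: "('a, 'm) monoid_scheme \<Rightarrow> ((int \<Rightarrow> 'a) \<times> int) monoid" where
  "wr A = \<lparr>carrier = {p. \<forall>x. fst p x \<in> carrier A},
           monoid.mult = (\<lambda>p q. ((\<lambda>x. fst p x \<otimes>\<^bsub>A\<^esub> fst q (x + snd p)), snd p + snd q)),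
           one = ((\<lambda>x. \<one>\<^bsub>A\<^esub>), 0)\<rparr>"

definition wr_z :: "('a, 'm) monoid_scheme \<Rightarrow> (int \<Rightarrow> 'a) \<times> int" where
  "wr_z H = ((\<lambda>_. \<one>\<^bsub>H\<^esub>), 1)"

definition wr_b :: "('a, 'm) monoid_scheme \<Rightarrow> (nat \<Rightarrow> 'a) \<Rightarrow> nat \<Rightarrow> (int \<Rightarrow> 'a) \<times> int" where
  "wr_b H a i = ((\<lambda>k. if k > 0 then a i else \<one>\<^bsub>H\<^esub>), 0)"

definition grpK :: "('a, 'm) monoid_scheme \<Rightarrow> (nat \<Rightarrow> 'a) \<Rightarrow> ((int \<Rightarrow> 'a) \<times> int) monoid" where
  "grpK H a = (wr H)\<lparr>carrier := generate (wr H) (insert (wr_z H) {wr_b H a i | i. i \<ge> 1})\<rparr>"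

definition grpW :: "('a, 'm) monoid_scheme \<Rightarrow> (nat \<Rightarrow> 'a)
    \<Rightarrow> ((int \<Rightarrow> (int \<Rightarrow> 'a) \<times> int) \<times> int) monoid" where
  "grpW H a = wr (grpK H a)"

definition cfun :: "('a, 'm) monoid_scheme \<Rightarrow> (nat \<Rightarrow> 'a) \<Rightarrow> int \<Rightarrow> (int \<Rightarrow> 'a) \<times> int" where
  "cfun H a k = (if k = 1 then wr_z H
                 else if (\<exists>i::nat. i > 0 \<and> k = 2 ^ i) then wr_b H a (THE i::nat. k = 2 ^ i)
                 else \<one>\<^bsub>grpK H a\<^esub>)"

definition elt_c :: "('a, 'm) monoid_scheme \<Rightarrow> (nat \<Rightarrow> 'a) \<Rightarrow> (int \<Rightarrow> (int \<Rightarrow> 'a) \<times> int) \<times> int" where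
  "elt_c H a = (cfun H a, 0)"

definition elt_s :: "('a, 'm) monoid_scheme \<Rightarrow> (nat \<Rightarrow> 'a) \<Rightarrow> (int \<Rightarrow> (int \<Rightarrow> 'a) \<times> int) \<times> int" where
  "elt_s H a = ((\<lambda>_. \<one>\<^bsub>grpK H a\<^esub>), 1)"

definition grpG :: "('a, 'm) monoid_scheme \<Rightarrow> (nat \<Rightarrow> 'a)
    \<Rightarrow> ((int \<Rightarrow> (int \<Rightarrow> 'a) \<times> int) \<times> int) monoid" where
  "grpG H a = (grpW H a)\<lparr>carrier := generate (grpW H a) {elt_c H a, elt_s H a}\<rparr>"

definition conjg :: "('b, 'm) monoid_scheme \<Rightarrow> 'b \<Rightarrow> 'b \<Rightarrow> 'b" where
  "conjg G x y = y \<otimes>\<^bsub>G\<^esub> x \<otimes>\<^bsub>G\<^esub> inv\<^bsub>G\<^esub> y"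

definition commg :: "('b, 'm) monoid_scheme \<Rightarrow> 'b \<Rightarrow> 'b \<Rightarrow> 'b" where
  "commg G x y = x \<otimes>\<^bsub>G\<^esub> y \<otimes>\<^bsub>G\<^esub> inv\<^bsub>G\<^esub> x \<otimes>\<^bsub>G\<^esub> inv\<^bsub>G\<^esub> y"

definition phi_gen :: "('a, 'm) monoid_scheme \<Rightarrow> (nat \<Rightarrow> 'a) \<Rightarrow> nat
    \<Rightarrow> (int \<Rightarrow> (int \<Rightarrow> 'a) \<times> int) \<times> int" where
  "phi_gen H a i = commg (grpG H a) (elt_c H a)
      (conjg (grpG H a) (elt_c H a) (elt_s H a [^]\<^bsub>grpG H a\<^esub> ((2::int) ^ i - 1)))"

definition word :: "('b, 'm) monoid_scheme \<Rightarrow> 'b \<Rightarrow> 'b \<Rightarrow> (nat \<Rightarrow> int) \<Rightarrow> (nat \<Rightarrow> int) \<Rightarrow> nat \<Rightarrow> 'b" where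
  "word G s c al be n = s [^]\<^bsub>G\<^esub> al 0 \<otimes>\<^bsub>G\<^esub>
     foldr (\<lambda>j acc. c [^]\<^bsub>G\<^esub> be j \<otimes>\<^bsub>G\<^esub> s [^]\<^bsub>G\<^esub> al j \<otimes>\<^bsub>G\<^esub> acc) [1..<n+1] \<one>\<^bsub>G\<^esub>"

end

theory Submission
  imports Defs
begin

text \<open>Project every coordinate of K \<le> H Wr Z onto its Z-component. This yields a
homomorphism \<psi> from G to Z Wr Z which sends c to the indicator function of 1 in the
base group and s to the generator of the top group. Each \<phi>(a(i)) is a commutator of
two elements whose images lie in the abelian base group, so \<phi>(H) \<subseteq> ker \<psi>. On the
other hand the base component of \<psi>(w) at t is the sum of those \<beta>(j) with
t + \<gamma>(j) = 1; taking t = 1 - \<gamma>(i) gives the claim.\<close>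

lemma wr_carrier: "carrier (wr A) = {p. \<forall>x. fst p x \<in> carrier A}"
  by (simp add: wr_def)

lemma wr_mult: "x \<otimes>\<^bsub>wr A\<^esub> y = ((\<lambda>t. fst x t \<otimes>\<^bsub>A\<^esub> fst y (t + snd x)), snd x + snd y)"
  by (simp add: wr_def)

lemma wr_one: "\<one>\<^bsub>wr A\<^esub> = ((\<lambda>x. \<one>\<^bsub>A\<^esub>), 0)"
  by (simp add: wr_def)

lemma group_wr:
  assumes "group A"
  shows "group (wr A)"
proof (rule groupI)
  interpret A: group A by fact
  show "x \<otimes>\<^bsub>wr A\<^esub> y \<in> carrier (wr A)" if "x \<in> carrier (wr A)" "y \<in> carrier (wr A)" for x y
    using that by (simp add: wr_carrier wr_mult)
  show "\<one>\<^bsub>wr A\<^esub> \<in> carrier (wr A)"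
    by (simp add: wr_carrier wr_one)
  show "x \<otimes>\<^bsub>wr A\<^esub> y \<otimes>\<^bsub>wr A\<^esub> z = x \<otimes>\<^bsub>wr A\<^esub> (y \<otimes>\<^bsub>wr A\<^esub> z)"
    if "x \<in> carrier (wr A)" "y \<in> carrier (wr A)" "z \<in> carrier (wr A)" for x y z
    using that by (simp add: wr_carrier wr_mult A.m_assoc add.assoc)
  show "\<one>\<^bsub>wr A\<^esub> \<otimes>\<^bsub>wr A\<^esub> x = x" if "x \<in> carrier (wr A)" for x
    using that by (simp add: wr_carrier wr_mult wr_one)
  show "\<exists>y\<in>carrier (wr A). y \<otimes>\<^bsub>wr A\<^esub> x = \<one>\<^bsub>wr A\<^esub>" if "x \<in> carrier (wr A)" for x
    using that
    by (intro bexI[of _ "(\<lambda>t. inv\<^bsub>A\<^esub> fst x (t - snd x), - snd x)"])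
      (auto simp: wr_carrier wr_mult wr_one)
qed

lemma wr_inv:
  assumes "group A" "x \<in> carrier (wr A)"
  shows "inv\<^bsub>wr A\<^esub> x = (\<lambda>t. inv\<^bsub>A\<^esub> fst x (t - snd x), - snd x)"
proof -
  interpret W: group "wr A" using group_wr[OF assms(1)] .
  interpret A: group A by fact
  show ?thesis
    using assms(2) by (intro W.inv_equality) (auto simp: wr_carrier wr_mult wr_one)
qed

lemma wr_base_commute:
  assumes "comm_group A" "x \<in> carrier (wr A)" "y \<in> carrier (wr A)" "snd x = 0" "snd y = 0"
  shows "x \<otimes>\<^bsub>wr A\<^esub> y = y \<otimes>\<^bsub>wr A\<^esub> x"
proof -
  interpret A: comm_group A by fact
  show ?thesis
    using assms(2-) by (simp add: wr_carrier wr_mult A.m_comm)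
qed

lemma snd_wr_conjg:
  assumes "group A" "x \<in> carrier (wr A)" "y \<in> carrier (wr A)"
  shows "snd (conjg (wr A) x y) = snd x"
  using assms by (simp add: conjg_def wr_mult wr_inv)

definition wr_map :: "('a \<Rightarrow> 'b) \<Rightarrow> (int \<Rightarrow> 'a) \<times> int \<Rightarrow> (int \<Rightarrow> 'b) \<times> int" where
  "wr_map h p = (h \<circ> fst p, snd p)"

lemma wr_map_hom:
  assumes "h \<in> hom A B"
  shows "wr_map h \<in> hom (wr A) (wr B)"
  using assms by (auto simp: hom_def wr_map_def wr_carrier wr_mult Pi_def)

lemma (in group) commg_eq_one:
  assumes "x \<in> carrier G" "y \<in> carrier G" "x \<otimes> y = y \<otimes> x"
  shows "commg G x y = \<one>"
proof -
  have "commg G x y = (x \<otimes> y) \<otimes> inv (y \<otimes> x)"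
    using assms(1,2) by (simp add: commg_def inv_mult_group m_assoc)
  then show ?thesis
    using assms by simp
qed

lemma (in group) conjg_closed:
  assumes "x \<in> carrier G" "y \<in> carrier G"
  shows "conjg G x y \<in> carrier G"
  using assms by (simp add: conjg_def)

lemma (in group_hom) hom_conjg:
  assumes "x \<in> carrier G" "y \<in> carrier G"
  shows "h (conjg G x y) = conjg H (h x) (h y)"
  using assms by (simp add: conjg_def)

lemma (in group_hom) hom_commg:
  assumes "x \<in> carrier G" "y \<in> carrier G"
  shows "h (commg G x y) = commg H (h x) (h y)"
  using assms by (simp add: commg_def)

lemma (in group_hom) generate_subset_kernel:
  assumes "S \<subseteq> kernel G H h"
  shows "generate G S \<subseteq> kernel G H h"
  using assms by (rule G.generate_subgroup_incl[OF _ subgroup_kernel])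

lemma (in group_hom) hom_word_foldr:
  assumes "s \<in> carrier G" "c \<in> carrier G"
  shows "foldr (\<lambda>j acc. c [^] be j \<otimes> s [^] al j \<otimes> acc) xs \<one> \<in> carrier G
    \<and> h (foldr (\<lambda>j acc. c [^] be j \<otimes> s [^] al j \<otimes> acc) xs \<one>)
       = foldr (\<lambda>j acc. h c [^]\<^bsub>H\<^esub> (be j :: int) \<otimes>\<^bsub>H\<^esub> h s [^]\<^bsub>H\<^esub> (al j :: int) \<otimes>\<^bsub>H\<^esub> acc) xs \<one>\<^bsub>H\<^esub>"
  by (induction xs) (simp_all add: assms hom_int_pow)

lemma (in group_hom) hom_word:
  assumes "s \<in> carrier G" "c \<in> carrier G"
  shows "h (word G s c al be n) = word H (h s) (h c) al be n"
  using hom_word_foldr[OF assms, of be al "[1..<n+1]"] assms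
  by (simp add: word_def hom_int_pow)

abbreviation Z_wr_Z :: "((int \<Rightarrow> int) \<times> int) monoid" where
  "Z_wr_Z \<equiv> wr integer_group"

lemma carrier_Z_wr_Z [simp]: "x \<in> carrier Z_wr_Z"
  by (simp add: wr_carrier)

lemma Z_wr_Z_inv: "inv\<^bsub>Z_wr_Z\<^esub> x = (\<lambda>t. - fst x (t - snd x), - snd x)"
  by (simp add: wr_inv)

lemma Z_wr_Z_top_pow: "((\<lambda>_. 0), 1) [^]\<^bsub>Z_wr_Z\<^esub> (k::int) = ((\<lambda>_. 0), k)"
proof -
  have "((\<lambda>_. 0), 1) [^]\<^bsub>Z_wr_Z\<^esub> (m::nat) = ((\<lambda>_. 0), int m)" for m
    by (induction m) (auto simp: wr_mult wr_one)
  then show ?thesis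
    by (simp add: int_pow_def2 Z_wr_Z_inv)
qed

lemma Z_wr_Z_base_pow: "(f, 0) [^]\<^bsub>Z_wr_Z\<^esub> (k::int) = ((\<lambda>t. k * f t), 0)"
proof -
  have "(f, 0) [^]\<^bsub>Z_wr_Z\<^esub> (m::nat) = ((\<lambda>t. int m * f t), 0)" for m
    by (induction m) (auto simp: wr_mult wr_one algebra_simps)
  then show ?thesis
    by (simp add: int_pow_def2 Z_wr_Z_inv)
qed

lemma Z_wr_Z_word_foldr:
  assumes "m \<le> N"
  shows "foldr (\<lambda>j acc. (f, 0) [^]\<^bsub>Z_wr_Z\<^esub> \<beta> j \<otimes>\<^bsub>Z_wr_Z\<^esub> ((\<lambda>_. 0), 1) [^]\<^bsub>Z_wr_Z\<^esub> \<alpha> j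
            \<otimes>\<^bsub>Z_wr_Z\<^esub> acc) [m..<N] \<one>\<^bsub>Z_wr_Z\<^esub>
    = ((\<lambda>t. \<Sum>j=m..<N. \<beta> j * f (t + (\<Sum>k=m..<j. \<alpha> k))), \<Sum>k=m..<N. \<alpha> k)"
  using assms
proof (induction m rule: inc_induct)
  case base
  then show ?case
    by (simp add: wr_one)
next
  case (step m)
  have shift: "(\<Sum>k=m..<j. \<alpha> k) = \<alpha> m + (\<Sum>k=Suc m..<j. \<alpha> k)" if "Suc m \<le> j" for j
    using that by (simp add: sum.atLeast_Suc_lessThan)
  have "(\<Sum>j=Suc m..<N. \<beta> j * f (t + \<alpha> m + (\<Sum>k=Suc m..<j. \<alpha> k)))
      = (\<Sum>j=Suc m..<N. \<beta> j * f (t + (\<Sum>k=m..<j. \<alpha> k)))" for t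
    by (rule sum.cong) (simp_all add: shift add.assoc)
  then show ?case
    using step by (simp add: upt_conv_Cons sum.atLeast_Suc_lessThan Z_wr_Z_base_pow
        Z_wr_Z_top_pow wr_mult del: upt_Suc)
qed

lemma Z_wr_Z_word:
  "word Z_wr_Z ((\<lambda>_. 0), 1) (f, 0) \<alpha> \<beta> n
    = ((\<lambda>t. \<Sum>j=1..n. \<beta> j * f (t + (\<Sum>k<j. \<alpha> k))), \<Sum>k<Suc n. \<alpha> k)"
proof -
  have prefix: "\<alpha> 0 + (\<Sum>k=1..<j. \<alpha> k) = (\<Sum>k<j. \<alpha> k)" if "1 \<le> j" for j
    using that by (simp add: sum.atLeast_Suc_lessThan atLeast0LessThan[symmetric])
  have "(\<Sum>j=1..<n+1. \<beta> j * f (t + \<alpha> 0 + (\<Sum>k=1..<j. \<alpha> k)))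
      = (\<Sum>j=1..n. \<beta> j * f (t + (\<Sum>k<j. \<alpha> k)))" for t
    by (intro sum.cong) (auto simp: add.assoc prefix[symmetric])
  moreover have "\<alpha> 0 + (\<Sum>k=1..<n+1. \<alpha> k) = (\<Sum>k<Suc n. \<alpha> k)"
    using prefix[of "n+1"] by simp
  ultimately show ?thesis
    using Z_wr_Z_word_foldr[of 1 "n+1" f \<beta> \<alpha>]
    by (simp add: word_def Z_wr_Z_top_pow wr_mult del: upt_Suc)
qed

lemma group_grpK:
  assumes "group H" "a ` {1..} \<subseteq> carrier H"
  shows "group (grpK H a)"
proof -
  interpret W: group "wr H" using group_wr[OF assms(1)] .
  interpret H: group H by fact
  have "insert (wr_z H) {wr_b H a i | i. i \<ge> 1} \<subseteq> carrier (wr H)"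
    using assms(2) by (auto simp: wr_carrier wr_z_def wr_b_def)
  then have "subgroup (generate (wr H) (insert (wr_z H) {wr_b H a i | i. i \<ge> 1})) (wr H)"
    by (rule W.generate_is_subgroup)
  then show ?thesis
    unfolding grpK_def by (rule subgroup.subgroup_is_group) (rule W.is_group)
qed

lemma elt_c_in_grpW: "elt_c H a \<in> carrier (grpW H a)"
proof -
  have "wr_b H a i \<in> generate (wr H) (insert (wr_z H) {wr_b H a i | i. i \<ge> 1})" if "i > 0" for i
    using that by (intro generate.incl) auto
  then have "cfun H a x \<in> carrier (grpK H a)" for x
    unfolding cfun_def grpK_def by (auto intro: generate.incl generate.one)
  then show ?thesis
    by (simp add: elt_c_def grpW_def wr_carrier)
qed

lemma elt_s_in_grpW: "elt_s H a \<in> carrier (grpW H a)"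
  unfolding elt_s_def grpW_def wr_carrier grpK_def by (auto intro: generate.one)

lemma
  assumes "group H" "a ` {1..} \<subseteq> carrier H"
  shows group_grpG: "group (grpG H a)"
    and carrier_grpG_subset: "carrier (grpG H a) \<subseteq> carrier (grpW H a)"
    and elt_c_in_grpG: "elt_c H a \<in> carrier (grpG H a)"
    and elt_s_in_grpG: "elt_s H a \<in> carrier (grpG H a)"
proof -
  interpret W: group "grpW H a"
    unfolding grpW_def using group_wr[OF group_grpK[OF assms]] .
  have "subgroup (generate (grpW H a) {elt_c H a, elt_s H a}) (grpW H a)"
    using elt_c_in_grpW elt_s_in_grpW by (intro W.generate_is_subgroup) auto
  then show "group (grpG H a)" "carrier (grpG H a) \<subseteq> carrier (grpW H a)"
    unfolding grpG_def by (auto intro: subgroup.subgroup_is_group W.is_group dest: subgroup.subset)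
  show "elt_c H a \<in> carrier (grpG H a)" "elt_s H a \<in> carrier (grpG H a)"
    unfolding grpG_def by (auto intro: generate.incl)
qed

lemma snd_hom_grpK: "snd \<in> hom (grpK H a) integer_group"
  by (auto simp: hom_def grpK_def wr_mult)

lemma group_hom_wr_map_snd:
  assumes "group H" "a ` {1..} \<subseteq> carrier H"
  shows "group_hom (grpG H a) Z_wr_Z (wr_map snd)"
proof -
  have "wr_map snd \<in> hom (grpW H a) Z_wr_Z"
    unfolding grpW_def by (rule wr_map_hom[OF snd_hom_grpK])
  then have "wr_map snd \<in> hom (grpG H a) Z_wr_Z"
    using carrier_grpG_subset[OF assms] unfolding hom_def grpG_def by auto
  then show ?thesis
    using group_grpG[OF assms] group_wr[OF group_integer_group]
    by (simp add: group_hom_def group_hom_axioms_def)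
qed

lemma wr_map_snd_elt_c: "wr_map snd (elt_c H a) = ((\<lambda>x. if x = 1 then 1 else 0), 0)"
  by (auto simp: wr_map_def elt_c_def cfun_def wr_z_def wr_b_def grpK_def wr_def)

lemma wr_map_snd_elt_s: "wr_map snd (elt_s H a) = ((\<lambda>_. 0), 1)"
  by (auto simp: wr_map_def elt_s_def grpK_def wr_def)

lemma wr_map_snd_phi_gen:
  assumes "group H" "a ` {1..} \<subseteq> carrier H"
  shows "wr_map snd (phi_gen H a i) = \<one>\<^bsub>Z_wr_Z\<^esub>"
proof -
  interpret \<psi>: group_hom "grpG H a" Z_wr_Z "wr_map snd"
    using group_hom_wr_map_snd[OF assms] .
  let ?c = "wr_map snd (elt_c H a)"
  let ?y = "conjg Z_wr_Z ?c (wr_map snd (elt_s H a) [^]\<^bsub>Z_wr_Z\<^esub> ((2::int) ^ i - 1))"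
  have "wr_map snd (phi_gen H a i) = commg Z_wr_Z ?c ?y"
    using elt_c_in_grpG[OF assms] elt_s_in_grpG[OF assms]
    by (simp add: phi_gen_def \<psi>.hom_commg \<psi>.hom_conjg \<psi>.hom_int_pow \<psi>.G.conjg_closed)
  moreover have "snd ?y = 0"
    by (simp add: snd_wr_conjg wr_map_snd_elt_c)
  ultimately show ?thesis
    using wr_base_commute[OF abelian_integer_group, of ?c ?y]
    by (simp add: \<psi>.H.commg_eq_one wr_map_snd_elt_c)
qed

theorem lemma5:
  fixes H :: "('a, 'm) monoid_scheme" and a :: "nat \<Rightarrow> 'a"
    and \<phi> :: "'a \<Rightarrow> (int \<Rightarrow> (int \<Rightarrow> 'a) \<times> int) \<times> int"
    and n :: nat and \<alpha> \<beta> :: "nat \<Rightarrow> int"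
  assumes "group H"
    and "a ` {1..} \<subseteq> carrier H"
    and "generate H (a ` {1..}) = carrier H"
    and "\<phi> \<in> hom H (grpG H a)"
    and "\<forall>i\<ge>1. \<phi> (a i) = phi_gen H a i"
    and "n \<ge> 1"
    and "\<forall>i\<in>{1..<n}. \<alpha> i \<noteq> 0"
    and "\<forall>j\<in>{1..n}. \<beta> j \<noteq> 0"
    and "word (grpG H a) (elt_s H a) (elt_c H a) \<alpha> \<beta> n \<in> \<phi> ` carrier H"
  shows "\<forall>i\<in>{1..n}.
           (\<Sum>j\<in>{j\<in>{1..n}. (\<Sum>k<j. \<alpha> k) = (\<Sum>k<i. \<alpha> k)}. \<beta> j) = 0"
proof
  interpret \<psi>: group_hom "grpG H a" Z_wr_Z "wr_map snd"
    using group_hom_wr_map_snd[OF assms(1,2)] .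
  interpret \<psi>\<phi>: group_hom H Z_wr_Z "wr_map snd \<circ> \<phi>"
    using hom_compose[OF assms(4) \<psi>.homh] assms(1) group_wr[OF group_integer_group]
    by (simp add: group_hom_def group_hom_axioms_def)
  have "a ` {1..} \<subseteq> kernel H Z_wr_Z (wr_map snd \<circ> \<phi>)"
    using assms(2,5) wr_map_snd_phi_gen[OF assms(1,2)] by (auto simp: kernel_def)
  then have \<phi>_in_kernel: "carrier H \<subseteq> kernel H Z_wr_Z (wr_map snd \<circ> \<phi>)"
    using \<psi>\<phi>.generate_subset_kernel assms(3) by auto
  have "wr_map snd (word (grpG H a) (elt_s H a) (elt_c H a) \<alpha> \<beta> n) = \<one>\<^bsub>Z_wr_Z\<^esub>"
    using assms(9) \<phi>_in_kernel by (auto simp: kernel_def)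
  then have "word Z_wr_Z ((\<lambda>_. 0), 1) ((\<lambda>x. if x = 1 then 1 else 0), 0) \<alpha> \<beta> n = \<one>\<^bsub>Z_wr_Z\<^esub>"
    using elt_c_in_grpG[OF assms(1,2)] elt_s_in_grpG[OF assms(1,2)]
    by (simp add: \<psi>.hom_word wr_map_snd_elt_c wr_map_snd_elt_s)
  then have base: "(\<Sum>j=1..n. if t + (\<Sum>k<j. \<alpha> k) = 1 then \<beta> j else 0) = 0" for t
    by (simp add: Z_wr_Z_word wr_one fun_eq_iff if_distrib[where f="\<lambda>x. _ * x"] cong: if_cong)
  fix i
  show "(\<Sum>j\<in>{j\<in>{1..n}. (\<Sum>k<j. \<alpha> k) = (\<Sum>k<i. \<alpha> k)}. \<beta> j) = 0"
    unfolding sum.inter_filter[OF finite_atLeastAtMost]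
    using base[of "1 - (\<Sum>k<i. \<alpha> k)"] by simp
qed

end
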